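(* Let $n\ge2$. If $K$ is a bounded measurable set in $\mathbb{R}^n$, then $V(K^{\diamond\diamond})\ge V(K)$. If in addition $K$ is a star body, equality holds if and only if $K=K^{\diamond\diamond}$.
   Context: For $x,y\in\mathbb{R}^n$ let $[x,y]=\sqrt{|x|^2|y|^2-(x\cdot y)^2}$. The sine polar body of $K\subset\mathbb{R}^n$ is $K^{\diamond}=\{x\in\mathbb{R}^n:[x,y]\le1\text{ for all }y\in K\}$, and $K^{\diamond\diamond}=(K^{\diamond})^{\diamond}$. $V$ is volume. A star body is a set $\{ru:u\in S^{n-1},0\le r\le\rho(u)\}$ with $\rho:S^{n-1}\to(0,\infty)$ continuous. *)

theory Defs
  imports "HOL-Analysis.Analysis"
begin

definition sine_bracket :: "real^'n \<Rightarrow> real^'n \<Rightarrow> real" where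
  "sine_bracket x y = sqrt ((norm x)\<^sup>2 * (norm y)\<^sup>2 - (x \<bullet> y)\<^sup>2)"

definition sine_polar :: "(real^'n) set \<Rightarrow> (real^'n) set" where
  "sine_polar K = {x. \<forall>y\<in>K. sine_bracket x y \<le> 1}"

definition star_body :: "(real^'n) set \<Rightarrow> bool" where
  "star_body K \<longleftrightarrow> (\<exists>\<rho> :: real^'n \<Rightarrow> real.
      continuous_on (sphere 0 1) \<rho> \<and> (\<forall>u\<in>sphere 0 1. \<rho> u > 0) \<and>
      K = {r *\<^sub>R u | r u. u \<in> sphere 0 1 \<and> 0 \<le> r \<and> r \<le> \<rho> u})"

end

theory Submission
  imports Defs
begin

text \<open>
  Since the bracket is symmetric, \<open>K \<subseteq> K\<^sup>\<diamond>\<^sup>\<diamond>\<close>, which gives the inequality. For a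
  fixed \<open>y\<close>, \<open>x \<mapsto> [x,y]\<close> is \<open>|y|\<close> times the length of the projection of \<open>x\<close> onto
  \<open>y\<^sup>\<bottom>\<close>, a continuous seminorm; hence every sine polar body is closed and convex.
  A star body is compact and contains a ball around the origin. So if \<open>K\<close> is a star
  body and \<open>z \<in> K\<^sup>\<diamond>\<^sup>\<diamond> - K\<close>, then \<open>z\<close> lies in the closure of the interior of the convex
  body \<open>K\<^sup>\<diamond>\<^sup>\<diamond>\<close>, and the open set \<open>-K\<close> around \<open>z\<close> meets that interior in a nonempty
  open set, which has positive volume and lies in \<open>K\<^sup>\<diamond>\<^sup>\<diamond> - K\<close>.
  The argument never uses \<open>n \<ge> 2\<close>.
\<close>

lemma sine_bracket_commute: "sine_bracket x y = sine_bracket y x"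
  unfolding sine_bracket_def by (simp add: inner_commute mult.commute)

lemma sine_bracket_scaleR_left: "sine_bracket (t *\<^sub>R x) y = \<bar>t\<bar> * sine_bracket x y"
proof -
  have "(norm (t *\<^sub>R x))\<^sup>2 * (norm y)\<^sup>2 - ((t *\<^sub>R x) \<bullet> y)\<^sup>2
        = t\<^sup>2 * ((norm x)\<^sup>2 * (norm y)\<^sup>2 - (x \<bullet> y)\<^sup>2)"
    by (simp add: power_mult_distrib algebra_simps)
  thus ?thesis unfolding sine_bracket_def by (simp add: real_sqrt_mult)
qed

lemma sine_bracket_eq_norm_orthogonal_part:
  fixes x y :: "real^'n"
  assumes "y \<noteq> 0"
  shows "sine_bracket x y = norm ((norm y)\<^sup>2 *\<^sub>R x - (x \<bullet> y) *\<^sub>R y) / norm y"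
proof -
  let ?P = "(norm y)\<^sup>2 *\<^sub>R x - (x \<bullet> y) *\<^sub>R y"
  have "(norm ?P)\<^sup>2 = ?P \<bullet> ?P" by (simp add: power2_norm_eq_inner)
  also have "\<dots> = (norm y)\<^sup>2 * (norm y)\<^sup>2 * (x \<bullet> x) - 2 * (norm y)\<^sup>2 * (x \<bullet> y)\<^sup>2
                    + (x \<bullet> y)\<^sup>2 * (y \<bullet> y)"
    by (simp add: inner_diff_left inner_diff_right inner_commute[of y x] algebra_simps
        power2_eq_square)
  also have "\<dots> = (norm y)\<^sup>2 * ((norm x)\<^sup>2 * (norm y)\<^sup>2 - (x \<bullet> y)\<^sup>2)"
    by (simp add: dot_square_norm algebra_simps power2_eq_square)
  finally have "(norm x)\<^sup>2 * (norm y)\<^sup>2 - (x \<bullet> y)\<^sup>2 = (norm ?P / norm y)\<^sup>2"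
    using assms by (simp add: power_divide)
  thus ?thesis unfolding sine_bracket_def by simp
qed

lemma sine_bracket_triangle_left:
  "sine_bracket (a + b) y \<le> sine_bracket a y + sine_bracket b y"
proof (cases "y = 0")
  case True
  thus ?thesis by (simp add: sine_bracket_def)
next
  case False
  have "(norm y)\<^sup>2 *\<^sub>R (a + b) - ((a + b) \<bullet> y) *\<^sub>R y
     = ((norm y)\<^sup>2 *\<^sub>R a - (a \<bullet> y) *\<^sub>R y) + ((norm y)\<^sup>2 *\<^sub>R b - (b \<bullet> y) *\<^sub>R y)"
    by (simp add: algebra_simps inner_add_left)
  thus ?thesis using False
    by (simp add: sine_bracket_eq_norm_orthogonal_part add_divide_distrib[symmetric]
        divide_right_mono norm_triangle_ineq)
qed

lemma subset_sine_polar_sine_polar: "K \<subseteq> sine_polar (sine_polar K)"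
  unfolding sine_polar_def by (auto simp: sine_bracket_commute)

lemma closed_sine_polar: "closed (sine_polar K)"
proof -
  have "sine_polar K = (\<Inter>y\<in>K. {x. sine_bracket x y \<le> 1})"
    unfolding sine_polar_def by auto
  moreover have "closed {x. sine_bracket x y \<le> 1}" for y
    unfolding sine_bracket_def by (intro closed_Collect_le continuous_intros)
  ultimately show ?thesis by auto
qed

lemma convex_sine_polar: "convex (sine_polar (K :: (real^'n) set))"
proof (rule convexI)
  fix x1 x2 :: "real^'n" and u v :: real
  assume x: "x1 \<in> sine_polar K" "x2 \<in> sine_polar K" and uv: "0 \<le> u" "0 \<le> v" "u + v = 1"
  show "u *\<^sub>R x1 + v *\<^sub>R x2 \<in> sine_polar K"
    unfolding sine_polar_def
  proof (intro CollectI ballI)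
    fix y assume "y \<in> K"
    hence "sine_bracket x1 y \<le> 1" "sine_bracket x2 y \<le> 1"
      using x unfolding sine_polar_def by auto
    have "sine_bracket (u *\<^sub>R x1 + v *\<^sub>R x2) y \<le> u * sine_bracket x1 y + v * sine_bracket x2 y"
      using sine_bracket_triangle_left[of "u *\<^sub>R x1" "v *\<^sub>R x2" y] uv
      by (simp add: sine_bracket_scaleR_left)
    also have "\<dots> \<le> u + v"
      using \<open>sine_bracket x1 y \<le> 1\<close> \<open>sine_bracket x2 y \<le> 1\<close> uv
      by (intro add_mono) (simp_all add: mult_left_le)
    finally show "sine_bracket (u *\<^sub>R x1 + v *\<^sub>R x2) y \<le> 1" using uv by simp
  qed
qed

lemma star_set_eq_image:
  fixes \<rho> :: "'a::real_normed_vector \<Rightarrow> real"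
  assumes "\<forall>u\<in>sphere 0 1. \<rho> u > 0"
  shows "{r *\<^sub>R u | r u. u \<in> sphere 0 1 \<and> 0 \<le> r \<and> r \<le> \<rho> u}
       = (\<lambda>(t, u). (t * \<rho> u) *\<^sub>R u) ` ({0..1} \<times> sphere 0 1)"
    (is "?K = ?f ` ?D")
proof
  show "?K \<subseteq> ?f ` ?D"
  proof
    fix x assume "x \<in> ?K"
    then obtain r u where ru: "x = r *\<^sub>R u" "u \<in> sphere 0 1" "0 \<le> r" "r \<le> \<rho> u"
      by blast
    with assms have "x = ?f (r / \<rho> u, u) \<and> (r / \<rho> u, u) \<in> ?D" by auto
    thus "x \<in> ?f ` ?D" by blast
  qed
  show "?f ` ?D \<subseteq> ?K"
  proof
    fix x assume "x \<in> ?f ` ?D"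
    then obtain t u where tu: "t \<in> {0..1}" "u \<in> sphere 0 1" "x = (t * \<rho> u) *\<^sub>R u" by auto
    with assms have "\<rho> u > 0" by blast
    with tu show "x \<in> ?K"
      by (intro CollectI exI[of _ "t * \<rho> u"] exI[of _ u]) (auto simp: mult_le_cancel_right1)
  qed
qed

lemma compact_star_body: "star_body (K :: (real^'n) set) \<Longrightarrow> compact K"
proof -
  assume "star_body K"
  then obtain \<rho> :: "real^'n \<Rightarrow> real" where
    cont: "continuous_on (sphere 0 1) \<rho>" and pos: "\<forall>u\<in>sphere 0 1. \<rho> u > 0" and
    K: "K = {r *\<^sub>R u | r u. u \<in> sphere 0 1 \<and> 0 \<le> r \<and> r \<le> \<rho> u}"
    unfolding star_body_def by blast
  have "continuous_on ({0..1} \<times> sphere 0 1) (\<lambda>p::real \<times> (real^'n). \<rho> (snd p))"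
    by (rule continuous_on_compose2[OF cont]) (auto intro: continuous_intros)
  hence "continuous_on ({0..1} \<times> sphere 0 1) (\<lambda>(t, u). (t * \<rho> u) *\<^sub>R u)"
    by (simp add: case_prod_beta') (intro continuous_intros)
  hence "compact ((\<lambda>(t, u). (t * \<rho> u) *\<^sub>R u) ` ({0..1::real} \<times> sphere (0::real^'n) 1))"
    by (intro compact_continuous_image compact_Times) auto
  thus "compact K" using star_set_eq_image[OF pos] K by simp
qed

lemma cball_subset_star_body:
  fixes K :: "(real^'n) set"
  assumes "star_body K"
  obtains m where "m > 0" "cball 0 m \<subseteq> K"
proof -
  obtain \<rho> :: "real^'n \<Rightarrow> real" where
    cont: "continuous_on (sphere 0 1) \<rho>" and pos: "\<forall>u\<in>sphere 0 1. \<rho> u > 0" and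
    K: "K = {r *\<^sub>R u | r u. u \<in> sphere 0 1 \<and> 0 \<le> r \<and> r \<le> \<rho> u}"
    using assms unfolding star_body_def by blast
  obtain u0 where u0: "u0 \<in> sphere 0 1" "\<forall>u\<in>sphere 0 1. \<rho> u0 \<le> \<rho> u"
    using continuous_attains_inf[OF compact_sphere _ cont] by auto
  have "cball 0 (\<rho> u0) \<subseteq> K"
  proof
    fix x :: "real^'n" assume x: "x \<in> cball 0 (\<rho> u0)"
    show "x \<in> K"
    proof (cases "x = 0")
      case True
      thus ?thesis unfolding K using u0(1) pos
        by (intro CollectI exI[of _ 0] exI[of _ u0]) (auto simp: less_imp_le)
    next
      case False
      hence u: "x /\<^sub>R norm x \<in> sphere 0 1" by (simp add: norm_divide)
      have "norm x \<le> \<rho> (x /\<^sub>R norm x)"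
        using x u0(2) u by (meson mem_cball_0 order_trans)
      with u False show ?thesis unfolding K
        by (intro CollectI exI[of _ "norm x"] exI[of _ "x /\<^sub>R norm x"]) simp
    qed
  qed
  with pos u0(1) that show ?thesis by blast
qed

lemma emeasure_lebesgue_open_pos:
  fixes S :: "'a::euclidean_space set"
  assumes "open S" "S \<noteq> {}"
  shows "0 < emeasure lebesgue S"
proof -
  obtain x e where "e > 0" "ball x e \<subseteq> S"
    using assms open_contains_ball by blast
  have "0 < ennreal (measure lborel (ball x e))"
    using content_ball_pos[OF \<open>e > 0\<close>] by simp
  also have "\<dots> = emeasure lborel (ball x e)"
    using emeasure_lborel_ball_finite[of x e]
    by (intro emeasure_eq_ennreal_measure[symmetric]) auto
  also have "\<dots> \<le> emeasure lebesgue S"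
    using \<open>ball x e \<subseteq> S\<close> assms(1) by (auto intro: emeasure_mono)
  finally show ?thesis .
qed

lemma closed_eq_convex_superset_if_emeasure_eq:
  fixes A C :: "'a::euclidean_space set"
  assumes "closed A" "interior A \<noteq> {}" "convex C" "A \<subseteq> C"
    and "A \<in> sets lebesgue" "C \<in> sets lebesgue"
    and "emeasure lebesgue A < \<infinity>" "emeasure lebesgue C = emeasure lebesgue A"
  shows "A = C"
proof (rule ccontr)
  assume "A \<noteq> C"
  then obtain z where z: "z \<in> C" "z \<notin> A" using assms(4) by blast
  have "interior C \<noteq> {}" using assms(2,4) interior_mono by blast
  hence "z \<in> closure (interior C)"
    using convex_closure_interior[OF assms(3)] z(1) closure_subset by blast
  moreover have "open (- A)" "z \<in> - A" using assms(1) z(2) by auto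
  ultimately have "- A \<inter> interior C \<noteq> {}"
    using open_Int_closure_eq_empty[of "- A" "interior C"] by blast
  hence "0 < emeasure lebesgue (- A \<inter> interior C)"
    using \<open>open (- A)\<close> by (intro emeasure_lebesgue_open_pos) auto
  also have "\<dots> \<le> emeasure lebesgue (C - A)"
    using assms(5,6) interior_subset[of C] by (intro emeasure_mono) auto
  also have "\<dots> = 0"
    using assms by (simp add: emeasure_Diff)
  finally show False by simp
qed

theorem lemma5p1:
  fixes K :: "(real^'n) set"
  assumes "CARD('n) \<ge> 2"
    and "bounded K"
    and "K \<in> sets lebesgue"
  shows "emeasure lebesgue (sine_polar (sine_polar K)) \<ge> emeasure lebesgue K
    \<and> (star_body K \<longrightarrow>
         (emeasure lebesgue (sine_polar (sine_polar K)) = emeasure lebesgue K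
            \<longleftrightarrow> K = sine_polar (sine_polar K)))"
proof -
  let ?D = "sine_polar (sine_polar K)"
  have D: "?D \<in> sets lebesgue"
    using borel_closed[OF closed_sine_polar] by (metis sets_lborel sets_completionI_sets)
  have "K = ?D" if "star_body K" "emeasure lebesgue ?D = emeasure lebesgue K"
  proof (rule closed_eq_convex_superset_if_emeasure_eq)
    show "closed K" using compact_star_body[OF \<open>star_body K\<close>] by (rule compact_imp_closed)
    obtain m where "m > 0" "cball 0 m \<subseteq> K"
      using cball_subset_star_body[OF \<open>star_body K\<close>] .
    hence "ball 0 m \<subseteq> interior K"
      by (meson ball_subset_cball interior_maximal open_ball order_trans)
    with \<open>m > 0\<close> show "interior K \<noteq> {}" by auto
    show "emeasure lebesgue K < \<infinity>"
      using bounded_set_imp_lmeasurable[OF assms(2,3)] unfolding fmeasurable_def by blast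
  qed (use that D assms(3) subset_sine_polar_sine_polar convex_sine_polar in auto)
  moreover have "emeasure lebesgue K \<le> emeasure lebesgue ?D"
    using D subset_sine_polar_sine_polar by (rule emeasure_mono[rotated])
  ultimately show ?thesis by auto
qed

end
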